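(* Let $n\in\mathbb{N}$, $N=\{1,\dots,n\}$, and let $(\mathbf v,d)=(v_1,\dots,v_n,d)\in\mathbb{N}^{n+1}$ with $v_i<d$ for all $i$. Write $\frac{v_i}{d}=\frac{s_i}{t_i}$ with $s_i,t_i\in\mathbb{N}$, $\gcd(s_i,t_i)=1$, put $w_i=v_i/d$, $d_{\mathbf w}=\operatorname{lcm}(t_j\mid j\in N)$, and for $k\in\mathbb{N}$ put $M(k)=\{j\in N\mid t_j\mid k\}$ and $\mu(k)=\prod_{j\in M(k)}\left(\frac1{w_j}-1\right)=\prod_{j\in M(k)}\frac{d-v_j}{v_j}$ (empty product $=1$). Let $D_{\mathbf w}=\prod_{j=1}^n\left(\frac1{s_j}\Lambda_{t_j}-\Lambda_1\right)\in\mathbb{Q}\langle S^{UR}\rangle$ and let $L(k)$, $k\in\mathbb{N}$, be its Lefschetz numbers. Let $\rho_{(\mathbf v,d)}(t)=t^{v_1+\dots+v_n}\prod_{j=1}^n\frac{t^{d-v_j}-1}{t^{v_j}-1}\in\mathbb{Q}(t)$. Then: (a) For all $k\in\mathbb{N}$: $M(k)=M(\gcd(k,d_{\mathbf w}))=\{j\in N\mid \frac{d}{\gcd(k,d_{\mathbf w})}\text{ divides } v_j\}$ and $\mu(k)=\mu(\gcd(k,d_{\mathbf w}))$. (b) For all $k\in\mathbb{N}$: $L(k)=L(\gcd(k,d_{\mathbf w}))=(-1)^{n-|M(k)|}\mu(k)\in\mathbb{Q}^*$. (c) If $(\mathbf v,d)$ satisfies condition $\overline{(C2)}$, then $\mu(k)\in\mathbb{N}$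 for all $k\in\mathbb{N}$. Moreover, $(\mathbf v,d)$ satisfies $\overline{(C2)}$ if and only if $\rho_{(\mathbf v,d)}\in\mathbb{Z}[t]$.
   Context: $S^{UR}\subset S^1$ is the set of all roots of unity; $\mathbb{Q}\langle S^{UR}\rangle$ is the group ring over $\mathbb{Q}$ of the multiplicative group $S^{UR}$, with elements $\sum_j b_j\langle\zeta_j\rangle$ ($b_j\in\mathbb{Q}$, $\zeta_j\in S^{UR}$) and product $\langle\zeta_1\rangle\langle\zeta_2\rangle=\langle\zeta_1\zeta_2\rangle$. For $m\in\mathbb{N}$, $\Lambda_m=\sum_{a=0}^{m-1}\langle e^{2\pi i a/m}\rangle$ (so $\Lambda_1=\langle1\rangle$ is the unit). The Lefschetz numbers of an element $\sum_j b_j\langle\zeta_j\rangle$ are $L(k)=\sum_j b_j\zeta_j^k\in\mathbb{C}$ for $k\in\mathbb{N}$. For $J\subset N$ and $c\in\mathbb{Z}$ let $(\mathbb{Z}^J)_c=\{\alpha\in\mathbb{Z}^n\mid \alpha_i=0\text{ for } i\notin J,\ \sum_i\alpha_iv_i=c\}$. Condition $\overline{(C2)}$: for every nonempty $J\subset N$ there exists $K\subset N$ with $|K|=|J|$ such that $(\mathbb{Z}^J)_{d-v_k}\neq\emptyset$ for all $k\in K$ (equivalently, $\gcd(v_j\mid j\in J)$ divides $d-v_k$ for all $k\in K$). *)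

theory Defs
  imports Complex_Main "HOL-Computational_Algebra.Polynomial" "HOL-Computational_Algebra.Fraction_Field"
begin

text \<open>Elements of the group ring Q<S^UR> are represented as functions complex => rat
  which are finitely supported on roots of unity (all elements built below are).\<close>

type_synonym grelem = "complex \<Rightarrow> rat"

definition gr_basis :: "complex \<Rightarrow> grelem" where
  "gr_basis \<zeta> = (\<lambda>z. if z = \<zeta> then 1 else 0)"

definition gr_mult :: "grelem \<Rightarrow> grelem \<Rightarrow> grelem" where
  "gr_mult x y = (\<lambda>z. \<Sum>p\<in>{(a, b). x a \<noteq> 0 \<and> y b \<noteq> 0 \<and> a * b = z}. x (fst p) * y (snd p))"

definition Lambda :: "nat \<Rightarrow> grelem" where
  "Lambda m = (\<lambda>z. \<Sum>a<m. gr_basis (exp (2 * of_real pi * \<i> * of_nat a / of_nat m)) z)"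

fun gr_prod :: "(nat \<Rightarrow> grelem) \<Rightarrow> nat \<Rightarrow> grelem" where
  "gr_prod f 0 = gr_basis 1"
| "gr_prod f (Suc n) = gr_mult (gr_prod f n) (f (Suc n))"

definition lefschetz :: "grelem \<Rightarrow> nat \<Rightarrow> complex" where
  "lefschetz x k = (\<Sum>z\<in>{z. x z \<noteq> 0}. of_rat (x z) * z ^ k)"

definition sn :: "(nat \<Rightarrow> nat) \<Rightarrow> nat \<Rightarrow> nat \<Rightarrow> nat" where
  "sn v d i = v i div gcd (v i) d"
definition tn :: "(nat \<Rightarrow> nat) \<Rightarrow> nat \<Rightarrow> nat \<Rightarrow> nat" where
  "tn v d i = d div gcd (v i) d"

definition dw :: "nat \<Rightarrow> (nat \<Rightarrow> nat) \<Rightarrow> nat \<Rightarrow> nat" where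
  "dw n v d = Lcm (tn v d ` {1..n})"

definition Mset :: "nat \<Rightarrow> (nat \<Rightarrow> nat) \<Rightarrow> nat \<Rightarrow> nat \<Rightarrow> nat set" where
  "Mset n v d k = {j \<in> {1..n}. tn v d j dvd k}"

definition mu :: "nat \<Rightarrow> (nat \<Rightarrow> nat) \<Rightarrow> nat \<Rightarrow> nat \<Rightarrow> rat" where
  "mu n v d k = (\<Prod>j\<in>Mset n v d k. of_nat (d - v j) / of_nat (v j))"

definition Dw :: "nat \<Rightarrow> (nat \<Rightarrow> nat) \<Rightarrow> nat \<Rightarrow> grelem" where
  "Dw n v d = gr_prod (\<lambda>j. (\<lambda>z. (1 / of_nat (sn v d j)) * Lambda (tn v d j) z - Lambda 1 z)) n"

definition ZJ :: "nat \<Rightarrow> (nat \<Rightarrow> nat) \<Rightarrow> nat set \<Rightarrow> int \<Rightarrow> (nat \<Rightarrow> int) set" where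
  "ZJ n v J c = {\<alpha>. (\<forall>i. i \<notin> J \<longrightarrow> \<alpha> i = 0) \<and> (\<Sum>i\<in>{1..n}. \<alpha> i * int (v i)) = c}"

definition C2bar :: "nat \<Rightarrow> (nat \<Rightarrow> nat) \<Rightarrow> nat \<Rightarrow> bool" where
  "C2bar n v d \<longleftrightarrow> (\<forall>J \<subseteq> {1..n}. J \<noteq> {} \<longrightarrow>
     (\<exists>K \<subseteq> {1..n}. card K = card J \<and> (\<forall>k\<in>K. ZJ n v J (int d - int (v k)) \<noteq> {})))"

definition rho :: "nat \<Rightarrow> (nat \<Rightarrow> nat) \<Rightarrow> nat \<Rightarrow> rat poly fract" where
  "rho n v d = Fract (monom 1 (\<Sum>j\<in>{1..n}. v j)) 1 *
     (\<Prod>j\<in>{1..n}. Fract (monom 1 (d - v j) - 1) (monom 1 (v j) - 1))"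

end

theory Submission
  imports Defs "HOL-Analysis.Complex_Transcendental" "HOL-Computational_Algebra.Fundamental_Theorem_Algebra"
begin

text \<open>
  Lefschetz numbers are multiplicative on the group ring, and that of Lambda_t at k is t or 0
  according as t divides k. Since t_j / s_j = d / v_j, the j-th factor of D_w contributes
  (d - v_j) / v_j if t_j divides k and -1 otherwise; as every t_j divides d_w, only gcd(k, d_w)
  matters.

  All roots of t^a - 1 are simple roots of unity, so over the complex numbers, and hence over the
  integers because the divisor is monic, prod_j (t^v_j - 1) divides t^S prod_j (t^(d - v_j) - 1)
  iff every m divides at least as many of the d - v_j as of the v_j. By Bezout, (Z^J)_c is
  nonempty iff gcd(v_j | j in J) divides c, which turns condition C2bar into exactly this
  counting condition. The counting condition survives restriction to M(k), the indices with
  d / gcd(k, d_w) dividing v_j; cancelling the factors t - 1 and evaluating at t = 1 then shows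
  that the product of the v_j over M(k) divides that of the d - v_j, i.e. mu(k) is a natural
  number.
\<close>

section \<open>Roots of unity and Lefschetz numbers\<close>

lemma exp_2pi_power:
  "exp (2 * of_real pi * \<i> / of_nat m) ^ a = exp (2 * of_real pi * \<i> * of_nat a / of_nat m)"
proof -
  have "exp (2 * of_real pi * \<i> / of_nat m) ^ a = exp (of_nat a * (2 * of_real pi * \<i> / of_nat m))"
    by (rule exp_of_nat_mult[symmetric])
  also have "of_nat a * (2 * of_real pi * \<i> / of_nat m) = 2 * of_real pi * \<i> * of_nat a / of_nat m"
    by simp
  finally show ?thesis .
qed

lemma exp_2pi_power_eq_1_iff:
  assumes "m > 0"
  shows "exp (2 * of_real pi * \<i> / of_nat m) ^ a = 1 \<longleftrightarrow> m dvd a"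
  using complex_root_unity_eq_1[of m a] assms by (simp add: exp_2pi_power)

lemma sum_powers_root_of_unity:
  assumes "m > 0"
  shows "(\<Sum>a<m. exp (2 * of_real pi * \<i> * of_nat a / of_nat m) ^ k) = (if m dvd k then of_nat m else 0)"
proof -
  define \<zeta> where "\<zeta> = exp (2 * of_real pi * \<i> / of_nat m) ^ k"
  have "exp (2 * of_real pi * \<i> * of_nat a / of_nat m) ^ k = \<zeta> ^ a" for a
    unfolding \<zeta>_def exp_2pi_power[symmetric] by (simp only: power_mult[symmetric] mult.commute)
  then have sum: "(\<Sum>a<m. exp (2 * of_real pi * \<i> * of_nat a / of_nat m) ^ k) = (\<Sum>a<m. \<zeta> ^ a)"
    by simp
  have "\<zeta> ^ m = 1"
    unfolding \<zeta>_def power_mult[symmetric] using assms by (simp add: exp_2pi_power_eq_1_iff)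
  moreover have "\<zeta> = 1 \<longleftrightarrow> m dvd k"
    unfolding \<zeta>_def by (rule exp_2pi_power_eq_1_iff[OF assms])
  ultimately show ?thesis
    unfolding sum by (auto simp: geometric_sum)
qed

lemma ex_multiplicative_order:
  fixes x :: "'a::monoid_mult"
  assumes "x ^ a = 1" "a > 0"
  shows "\<exists>m>0. \<forall>c. x ^ c = 1 \<longleftrightarrow> m dvd c"
proof -
  define m where "m = (LEAST m. 0 < m \<and> x ^ m = 1)"
  have m: "0 < m \<and> x ^ m = 1"
    unfolding m_def by (rule LeastI[of _ a]) (use assms in simp)
  have "x ^ c = 1 \<longleftrightarrow> m dvd c" for c
  proof -
    have "x ^ c = x ^ (m * (c div m) + c mod m)"
      by simp
    also have "\<dots> = (x ^ m) ^ (c div m) * x ^ (c mod m)"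
      by (simp only: power_add power_mult)
    finally have xc: "x ^ c = x ^ (c mod m)"
      using m by simp
    have "\<not> (0 < c mod m \<and> x ^ (c mod m) = 1)"
      unfolding m_def by (rule not_less_Least) (use m in \<open>simp add: m_def\<close>)
    then show ?thesis
      using xc by (auto simp: dvd_eq_mod_eq_0)
  qed
  then show ?thesis
    using m by blast
qed

lemma lefschetz_eq_sum_superset:
  assumes "finite A" "{z. x z \<noteq> 0} \<subseteq> A"
  shows "lefschetz x k = (\<Sum>z\<in>A. of_rat (x z) * z ^ k)"
  unfolding lefschetz_def using assms by (intro sum.mono_neutral_left) auto

lemma gr_mult_support:
  "{z. gr_mult x y z \<noteq> 0} \<subseteq> (\<lambda>(a, b). a * b) ` ({a. x a \<noteq> 0} \<times> {b. y b \<noteq> 0})"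
proof
  fix z assume "z \<in> {z. gr_mult x y z \<noteq> 0}"
  moreover have "gr_mult x y z = 0" if "{(a, b). x a \<noteq> 0 \<and> y b \<noteq> 0 \<and> a * b = z} = {}"
    unfolding gr_mult_def that by simp
  ultimately have "{(a, b). x a \<noteq> 0 \<and> y b \<noteq> 0 \<and> a * b = z} \<noteq> {}"
    by auto
  then obtain a b where "x a \<noteq> 0" "y b \<noteq> 0" "z = a * b"
    by blast
  then show "z \<in> (\<lambda>(a, b). a * b) ` ({a. x a \<noteq> 0} \<times> {b. y b \<noteq> 0})"
    by (auto intro: image_eqI[of _ _ "(a, b)"])
qed

lemma finite_support_gr_mult:
  "finite {a. x a \<noteq> 0} \<Longrightarrow> finite {b. y b \<noteq> 0} \<Longrightarrow> finite {z. gr_mult x y z \<noteq> 0}"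
  by (rule finite_subset[OF gr_mult_support]) simp

lemma lefschetz_gr_mult:
  assumes "finite {a. x a \<noteq> 0}" "finite {b. y b \<noteq> 0}"
  shows "lefschetz (gr_mult x y) k = lefschetz x k * lefschetz y k"
proof -
  define P where "P = {a. x a \<noteq> 0} \<times> {b. y b \<noteq> 0}"
  define f :: "complex \<times> complex \<Rightarrow> complex" where "f = (\<lambda>(a, b). a * b)"
  have "finite P" using assms by (simp add: P_def)
  have fiber: "{p\<in>P. f p = z} = {(a, b). x a \<noteq> 0 \<and> y b \<noteq> 0 \<and> a * b = z}" for z
    unfolding P_def f_def by auto
  have "lefschetz x k * lefschetz y k = (\<Sum>p\<in>P. of_rat (x (fst p) * y (snd p)) * f p ^ k)"
    unfolding lefschetz_def P_def f_def sum_product sum.cartesian_product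
    by (rule sum.cong) (auto simp: power_mult_distrib of_rat_mult)
  also have "\<dots> = (\<Sum>z\<in>f ` P. \<Sum>p\<in>{p\<in>P. f p = z}. of_rat (x (fst p) * y (snd p)) * z ^ k)"
    by (subst sum.image_gen[OF \<open>finite P\<close>]) (auto intro!: sum.cong)
  also have "\<dots> = (\<Sum>z\<in>f ` P. of_rat (gr_mult x y z) * z ^ k)"
    by (simp add: gr_mult_def fiber of_rat_sum sum_distrib_right)
  also have "\<dots> = lefschetz (gr_mult x y) k"
    using gr_mult_support \<open>finite P\<close> unfolding P_def f_def
    by (intro lefschetz_eq_sum_superset[symmetric]) auto
  finally show ?thesis ..
qed

lemma lefschetz_gr_prod:
  assumes "\<forall>j\<in>{1..n}. finite {z. f j z \<noteq> 0}"
  shows "finite {z. gr_prod f n z \<noteq> 0} \<and> lefschetz (gr_prod f n) k = (\<Prod>j\<in>{1..n}. lefschetz (f j) k)"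
  using assms
proof (induction n)
  case 0
  have "{z. gr_basis 1 z \<noteq> 0} = {1}" by (auto simp: gr_basis_def)
  then show ?case by (simp add: lefschetz_def gr_basis_def)
next
  case (Suc n)
  then show ?case
    by (simp add: lefschetz_gr_mult finite_support_gr_mult prod.cl_ivl_Suc)
qed

lemma lefschetz_lincomb:
  assumes "finite {z. x z \<noteq> 0}" "finite {z. y z \<noteq> 0}"
  shows "lefschetz (\<lambda>z. c * x z - y z) k = of_rat c * lefschetz x k - lefschetz y k"
proof -
  let ?A = "{z. x z \<noteq> 0} \<union> {z. y z \<noteq> 0}"
  have "finite ?A" using assms by simp
  then have "lefschetz (\<lambda>z. c * x z - y z) k = (\<Sum>z\<in>?A. of_rat (c * x z - y z) * z ^ k)"
    and "lefschetz x k = (\<Sum>z\<in>?A. of_rat (x z) * z ^ k)"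
    and "lefschetz y k = (\<Sum>z\<in>?A. of_rat (y z) * z ^ k)"
    by (auto intro!: lefschetz_eq_sum_superset)
  then show ?thesis
    by (simp add: of_rat_diff of_rat_mult sum_distrib_left sum_subtractf algebra_simps)
qed

lemma finite_support_lincomb:
  fixes x y :: grelem
  shows "finite {z. x z \<noteq> 0} \<Longrightarrow> finite {z. y z \<noteq> 0} \<Longrightarrow> finite {z. c * x z - y z \<noteq> 0}"
  by (rule finite_subset[of _ "{z. x z \<noteq> 0} \<union> {z. y z \<noteq> 0}"]) auto

lemma Lambda_support:
  "{z. Lambda m z \<noteq> 0} \<subseteq> (\<lambda>a. exp (2 * of_real pi * \<i> * of_nat a / of_nat m)) ` {..<m}"
proof
  fix z assume "z \<in> {z. Lambda m z \<noteq> 0}"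
  then obtain a where "a < m" "gr_basis (exp (2 * of_real pi * \<i> * of_nat a / of_nat m)) z \<noteq> 0"
    unfolding Lambda_def by (auto dest: sum.not_neutral_contains_not_neutral)
  then show "z \<in> (\<lambda>a. exp (2 * of_real pi * \<i> * of_nat a / of_nat m)) ` {..<m}"
    by (auto simp: gr_basis_def split: if_splits)
qed

lemma finite_support_Lambda: "finite {z. Lambda m z \<noteq> 0}"
  by (rule finite_subset[OF Lambda_support]) simp

lemma lefschetz_Lambda:
  assumes "m > 0"
  shows "lefschetz (Lambda m) k = (if m dvd k then of_nat m else 0)"
proof -
  define e where "e a = exp (2 * of_real pi * \<i> * of_nat a / of_nat m)" for a
  have Lambda_e: "Lambda m z = (\<Sum>a<m. if z = e a then 1 else 0)" for z
    unfolding Lambda_def gr_basis_def e_def ..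
  have "lefschetz (Lambda m) k = (\<Sum>z\<in>e ` {..<m}. of_rat (Lambda m z) * z ^ k)"
    using Lambda_support unfolding e_def by (intro lefschetz_eq_sum_superset) auto
  also have "\<dots> = (\<Sum>z\<in>e ` {..<m}. \<Sum>a<m. if z = e a then z ^ k else 0)"
    unfolding Lambda_e of_rat_sum sum_distrib_right by (intro sum.cong) auto
  also have "\<dots> = (\<Sum>a<m. e a ^ k)"
    by (subst sum.swap) (simp add: sum.delta')
  finally show ?thesis
    unfolding e_def using sum_powers_root_of_unity[OF assms] by simp
qed

section \<open>Products of the polynomials t^a - 1\<close>

lemma map_poly_of_int_add [simp]:
  "(map_poly of_int (p + q) :: 'a::comm_ring_1 poly) = map_poly of_int p + map_poly of_int q"
  by (rule poly_eqI) (simp add: coeff_map_poly)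

lemma map_poly_of_int_diff [simp]:
  "(map_poly of_int (p - q) :: 'a::comm_ring_1 poly) = map_poly of_int p - map_poly of_int q"
  by (rule poly_eqI) (simp add: coeff_map_poly)

lemma map_poly_of_int_mult [simp]:
  "(map_poly of_int (p * q) :: 'a::comm_ring_1 poly) = map_poly of_int p * map_poly of_int q"
  by (rule poly_eqI) (simp add: coeff_map_poly coeff_mult of_int_sum)

lemma map_poly_of_int_prod:
  "(map_poly of_int (\<Prod>j\<in>I. f j) :: 'a::comm_ring_1 poly) = (\<Prod>j\<in>I. map_poly of_int (f j))"
  by (induction I rule: infinite_finite_induct) auto

lemma map_poly_of_int_monom [simp]:
  "(map_poly of_int (monom c n) :: 'a::comm_ring_1 poly) = monom (of_int c) n"
  by (simp add: map_poly_monom)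

lemma map_poly_of_int_eq_iff [simp]:
  "(map_poly of_int p :: 'a::{comm_ring_1,ring_char_0} poly) = map_poly of_int q \<longleftrightarrow> p = q"
  by (metis (no_types, lifting) coeff_map_poly of_int_0 of_int_eq_iff poly_eqI)

definition pow_minus_one_prod :: "nat set \<Rightarrow> (nat \<Rightarrow> nat) \<Rightarrow> 'a::comm_ring_1 poly" where
  "pow_minus_one_prod I a = (\<Prod>j\<in>I. monom 1 (a j) - 1)"

lemma map_poly_of_int_pow_minus_one_prod [simp]:
  "(map_poly of_int (pow_minus_one_prod I a) :: 'a::comm_ring_1 poly) = pow_minus_one_prod I a"
  by (simp add: pow_minus_one_prod_def map_poly_of_int_prod)

lemma lead_coeff_monom_minus_one:
  assumes "a > 0"
  shows "lead_coeff (monom 1 a - 1 :: 'a::comm_ring_1 poly) = 1"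
proof -
  have "lead_coeff (monom 1 a - 1 :: 'a poly) = lead_coeff (- 1 + monom 1 a)"
    by (simp only: diff_conv_add_uminus add.commute)
  also have "\<dots> = lead_coeff (monom 1 a :: 'a poly)"
    by (rule lead_coeff_add_le) (use assms in \<open>simp add: degree_monom_eq\<close>)
  finally show ?thesis
    by (simp only: lead_coeff_monom)
qed

lemma lead_coeff_pow_minus_one_prod:
  assumes "\<forall>j\<in>I. a j > 0"
  shows "lead_coeff (pow_minus_one_prod I a :: 'a::idom poly) = 1"
  unfolding pow_minus_one_prod_def lead_coeff_prod
  using assms lead_coeff_monom_minus_one by (intro prod.neutral) blast

lemma pow_minus_one_prod_nonzero:
  assumes "\<forall>j\<in>I. a j > 0"
  shows "(pow_minus_one_prod I a :: 'a::idom poly) \<noteq> 0"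
  using lead_coeff_pow_minus_one_prod[OF assms] by (metis leading_coeff_0_iff zero_neq_one)

lemma order_monom_minus_one:
  assumes "a > 0"
  shows "order x (monom 1 a - 1 :: complex poly) = (if x ^ a = 1 then 1 else 0)"
proof -
  let ?p = "monom 1 a - 1 :: complex poly"
  have "?p \<noteq> 0"
    using lead_coeff_monom_minus_one[OF assms] by (metis leading_coeff_0_iff zero_neq_one)
  have "rsquarefree ?p"
    unfolding rsquarefree_roots
  proof (intro allI notI)
    fix y assume root: "poly ?p y = 0 \<and> poly (pderiv ?p) y = 0"
    then have "y ^ a = 1"
      by (simp add: poly_monom)
    then have "y \<noteq> 0"
      using assms by (auto simp: power_0_left)
    moreover have "poly (pderiv ?p) y = of_nat a * y ^ (a - 1)"
      by (simp add: pderiv_diff pderiv_monom poly_monom)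
    ultimately show False
      using root assms by simp
  qed
  then show ?thesis
    using rsquarefree_root_order[of ?p x] \<open>?p \<noteq> 0\<close> by (auto simp: poly_monom order_0I)
qed

lemma order_pow_minus_one_prod:
  assumes "finite I" "\<forall>j\<in>I. a j > 0"
  shows "order x (pow_minus_one_prod I a :: complex poly) = card {j\<in>I. x ^ a j = 1}"
  using assms
proof (induction I rule: finite_induct)
  case empty
  then show ?case by (simp add: pow_minus_one_prod_def)
next
  case (insert j I)
  have "pow_minus_one_prod (insert j I) a = (monom 1 (a j) - 1 :: complex poly) * pow_minus_one_prod I a"
    using insert.hyps by (simp add: pow_minus_one_prod_def)
  moreover have "{i\<in>insert j I. x ^ a i = 1} =
      (if x ^ a j = 1 then insert j {i\<in>I. x ^ a i = 1} else {i\<in>I. x ^ a i = 1})"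
    by auto
  ultimately show ?case
    using insert pow_minus_one_prod_nonzero[OF insert.prems, where 'a = complex]
    by (simp add: order_mult order_monom_minus_one)
qed

lemma complex_poly_dvd_iff_order_le:
  fixes p q :: "complex poly"
  assumes "q \<noteq> 0" "p \<noteq> 0"
  shows "q dvd p \<longleftrightarrow> (\<forall>x. order x q \<le> order x p)"
proof
  assume "\<forall>x. order x q \<le> order x p"
  then have "proots q \<subseteq># proots p"
    using assms by (simp add: subseteq_mset_def)
  then obtain R where R: "proots p = proots q + R"
    by (metis subset_mset.le_iff_add)
  let ?R = "\<lambda>A. \<Prod>x\<in>#A. [:-x, 1:] :: complex poly"
  have "p = smult (lead_coeff p) (?R (proots q) * ?R R)"
    using complex_poly_decompose_multiset[of p] by (simp add: R)
  moreover have "?R (proots q) dvd smult (lead_coeff p) (?R (proots q) * ?R R)"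
    by (intro dvd_smult dvd_triv_left)
  ultimately have "?R (proots q) dvd p"
    by simp
  moreover have "q = smult (lead_coeff q) (?R (proots q))"
    by (rule complex_poly_decompose_multiset[symmetric])
  then have "q dvd ?R (proots q)"
    using assms(1) by (metis smult_dvd_iff dvd_refl leading_coeff_0_iff)
  ultimately show "q dvd p"
    by (rule dvd_trans[rotated])
qed (use assms dvd_imp_order_le in blast)

lemma of_int_poly_dvd_iff_monic:
  fixes p q :: "int poly"
  assumes "lead_coeff q = 1"
  shows "(map_poly of_int q :: 'a::{idom,ring_char_0} poly) dvd map_poly of_int p \<longleftrightarrow> q dvd p"
proof
  assume dvd: "(map_poly of_int q :: 'a poly) dvd map_poly of_int p"
  have "q \<noteq> 0"
    using assms by auto
  obtain s r where sr: "pseudo_divmod p q = (s, r)"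
    by fastforce
  have "p = q * s + r"
    using pseudo_divmod(1)[OF \<open>q \<noteq> 0\<close> sr] assms by simp
  then have dvd_r: "(map_poly of_int q :: 'a poly) dvd map_poly of_int r"
    using dvd by (simp add: dvd_add_right_iff)
  have "r = 0"
  proof (rule ccontr)
    assume "r \<noteq> 0"
    then have "(map_poly of_int r :: 'a poly) \<noteq> 0"
      using map_poly_of_int_eq_iff[of r 0] by simp
    then have "degree q \<le> degree r"
      using dvd_imp_degree_le[OF dvd_r] by (simp add: degree_map_poly)
    then show False
      using pseudo_divmod(2)[OF \<open>q \<noteq> 0\<close> sr] \<open>r \<noteq> 0\<close> by simp
  qed
  then show "q dvd p"
    using \<open>p = q * s + r\<close> by simp
qed (auto elim!: dvdE)

definition divisibility_dominated :: "nat set \<Rightarrow> (nat \<Rightarrow> nat) \<Rightarrow> (nat \<Rightarrow> nat) \<Rightarrow> bool" where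
  "divisibility_dominated I b a \<longleftrightarrow> (\<forall>m>0. card {j\<in>I. m dvd b j} \<le> card {j\<in>I. m dvd a j})"

lemma root_count_le_iff_divisibility_dominated:
  assumes "\<forall>j\<in>I. b j > 0"
  shows "(\<forall>x::complex. card {j\<in>I. x ^ b j = 1} \<le> card {j\<in>I. x ^ a j = 1}) \<longleftrightarrow>
         divisibility_dominated I b a"
  unfolding divisibility_dominated_def
proof (intro iffI allI impI)
  fix m :: nat
  assume "m > 0" and roots: "\<forall>x::complex. card {j\<in>I. x ^ b j = 1} \<le> card {j\<in>I. x ^ a j = 1}"
  have roots_eq: "{j\<in>I. exp (2 * of_real pi * \<i> / of_nat m) ^ c j = 1} = {j\<in>I. m dvd c j}" for c
    using exp_2pi_power_eq_1_iff[OF \<open>m > 0\<close>] by blast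
  show "card {j\<in>I. m dvd b j} \<le> card {j\<in>I. m dvd a j}"
    using roots[rule_format, of "exp (2 * of_real pi * \<i> / of_nat m)"] unfolding roots_eq .
next
  fix x :: complex
  assume dom: "\<forall>m>0. card {j\<in>I. m dvd b j} \<le> card {j\<in>I. m dvd a j}"
  show "card {j\<in>I. x ^ b j = 1} \<le> card {j\<in>I. x ^ a j = 1}"
  proof (cases "\<exists>j\<in>I. x ^ b j = 1")
    case True
    then obtain j where "j \<in> I" "x ^ b j = 1"
      by blast
    moreover have "b j > 0"
      using assms \<open>j \<in> I\<close> by blast
    ultimately obtain m where "m > 0" and m: "\<And>c. x ^ c = 1 \<longleftrightarrow> m dvd c"
      using ex_multiplicative_order[of x "b j"] by blast
    then have roots_eq: "{j\<in>I. x ^ c j = 1} = {j\<in>I. m dvd c j}" for c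
      by blast
    show ?thesis
      using dom \<open>m > 0\<close> unfolding roots_eq by blast
  next
    case False
    then have "{j\<in>I. x ^ b j = 1} = {}"
      by blast
    then show ?thesis
      by (simp only: card.empty le0)
  qed
qed

lemma pow_minus_one_prod_dvd_iff:
  assumes "finite I" "\<forall>j\<in>I. a j > 0" "\<forall>j\<in>I. b j > 0"
  shows "(pow_minus_one_prod I b :: int poly) dvd monom 1 S * pow_minus_one_prod I a \<longleftrightarrow>
         divisibility_dominated I b a"
proof -
  let ?Pa = "pow_minus_one_prod I a :: complex poly" and ?Pb = "pow_minus_one_prod I b :: complex poly"
  have "monom 1 S * ?Pa \<noteq> 0" "?Pb \<noteq> 0"
    using assms by (simp_all add: pow_minus_one_prod_nonzero)
  then have order_le_iff: "order x ?Pb \<le> order x (monom 1 S * ?Pa) \<longleftrightarrow>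
      card {j\<in>I. x ^ b j = 1} \<le> card {j\<in>I. x ^ a j = 1}" for x
  proof (cases "x = 0")
    case True
    then have "{j\<in>I. x ^ b j = 1} = {}"
      using assms(3) by (auto simp: power_0_left)
    then show ?thesis
      by (simp only: order_pow_minus_one_prod[OF assms(1,3)] card.empty le0)
  next
    case False
    then have "order x (monom 1 S :: complex poly) = 0"
      by (intro order_0I) (simp add: poly_monom)
    then show ?thesis
      using assms \<open>monom 1 S * ?Pa \<noteq> 0\<close> by (simp add: order_mult order_pow_minus_one_prod)
  qed
  have "(pow_minus_one_prod I b :: int poly) dvd monom 1 S * pow_minus_one_prod I a \<longleftrightarrow>
        ?Pb dvd monom 1 S * ?Pa"
    using of_int_poly_dvd_iff_monic[OF lead_coeff_pow_minus_one_prod[OF assms(3)],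
        of "monom 1 S * pow_minus_one_prod I a", where 'a = complex]
    by simp
  also have "\<dots> \<longleftrightarrow> (\<forall>x. order x ?Pb \<le> order x (monom 1 S * ?Pa))"
    by (rule complex_poly_dvd_iff_order_le) fact+
  also have "\<dots> \<longleftrightarrow> divisibility_dominated I b a"
    unfolding order_le_iff by (rule root_count_le_iff_divisibility_dominated[OF assms(3)])
  finally show ?thesis .
qed

lemma pow_minus_one_prod_factor:
  "(pow_minus_one_prod I a :: 'a::comm_ring_1 poly) =
     [:-1, 1:] ^ card I * (\<Prod>j\<in>I. \<Sum>i<a j. [:0, 1:] ^ i)"
proof -
  have factor: "(monom 1 m - 1 :: 'a poly) = [:-1, 1:] * (\<Sum>i<m. [:0, 1:] ^ i)" for m
  proof -
    have "(monom 1 m - 1 :: 'a poly) = [:0, 1:] ^ m - 1"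
      by (simp add: monom_altdef)
    also have "\<dots> = ([:0, 1:] - 1) * (\<Sum>i<m. [:0, 1:] ^ i)"
      by (rule power_diff_1_eq)
    also have "[:0, 1:] - 1 = ([:-1, 1:] :: 'a poly)"
      by (simp add: one_pCons)
    finally show ?thesis .
  qed
  show ?thesis
    unfolding pow_minus_one_prod_def by (simp only: factor prod.distrib prod_constant)
qed

lemma prod_dvd_if_pow_minus_one_prod_dvd:
  assumes "(pow_minus_one_prod I b :: int poly) dvd pow_minus_one_prod I a"
  shows "(\<Prod>j\<in>I. b j) dvd (\<Prod>j\<in>I. a j)"
proof -
  let ?G = "\<lambda>f. (\<Prod>j\<in>I. \<Sum>i<f j. [:0, 1:] ^ i) :: int poly"
  obtain q where "pow_minus_one_prod I a = pow_minus_one_prod I b * (q :: int poly)"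
    using assms by (elim dvdE)
  then have "[:-1, 1:] ^ card I * ?G a = [:-1, 1:] ^ card I * (?G b * q)"
    by (simp add: pow_minus_one_prod_factor mult.assoc)
  then have "?G a = ?G b * q"
    by simp
  then have "poly (?G a) 1 = poly (?G b) 1 * poly q 1"
    by simp
  then have "int (\<Prod>j\<in>I. a j) = int (\<Prod>j\<in>I. b j) * poly q 1"
    by (simp add: poly_prod poly_sum)
  then show ?thesis
    by (metis dvd_triv_left int_dvd_int_iff)
qed

section \<open>Condition C2bar as a counting condition\<close>

lemma ZJ_Gcd_nonempty:
  assumes "finite J" "J \<subseteq> {1..n}"
  shows "ZJ n v J (int (Gcd (v ` J))) \<noteq> {}"
  using assms
proof (induction J rule: finite_induct)
  case empty
  have "(\<lambda>_. 0) \<in> ZJ n v {} 0"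
    by (simp add: ZJ_def)
  then show ?case
    by auto
next
  case (insert j J)
  then obtain \<alpha> where \<alpha>: "\<forall>i. i \<notin> J \<longrightarrow> \<alpha> i = 0" "(\<Sum>i\<in>{1..n}. \<alpha> i * int (v i)) = int (Gcd (v ` J))"
    unfolding ZJ_def by auto
  obtain u w where uw: "u * int (v j) + w * int (Gcd (v ` J)) = int (Gcd (v ` insert j J))"
    using bezout_int[of "int (v j)" "int (Gcd (v ` J))"] by auto
  define \<beta> where "\<beta> i = w * \<alpha> i + (if i = j then u else 0)" for i
  have "\<beta> i * int (v i) = w * (\<alpha> i * int (v i)) + (if i = j then u * int (v j) else 0)" for i
    by (simp add: \<beta>_def algebra_simps)
  then have "(\<Sum>i\<in>{1..n}. \<beta> i * int (v i)) = w * (\<Sum>i\<in>{1..n}. \<alpha> i * int (v i)) + u * int (v j)"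
    using insert.prems by (simp add: sum.distrib sum_distrib_left)
  then have "\<beta> \<in> ZJ n v (insert j J) (int (Gcd (v ` insert j J)))"
    using \<alpha> uw insert.hyps by (auto simp: ZJ_def \<beta>_def algebra_simps)
  then show ?case
    by blast
qed

lemma ZJ_nonempty_iff:
  assumes "J \<subseteq> {1..n}"
  shows "ZJ n v J c \<noteq> {} \<longleftrightarrow> int (Gcd (v ` J)) dvd c"
proof
  assume "ZJ n v J c \<noteq> {}"
  then obtain \<alpha> where \<alpha>: "\<forall>i. i \<notin> J \<longrightarrow> \<alpha> i = 0" "(\<Sum>i\<in>{1..n}. \<alpha> i * int (v i)) = c"
    unfolding ZJ_def by auto
  have "int (Gcd (v ` J)) dvd \<alpha> i * int (v i)" for i
    using \<alpha>(1) by (cases "i \<in> J") (simp_all add: Gcd_dvd)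
  then show "int (Gcd (v ` J)) dvd c"
    unfolding \<alpha>(2)[symmetric] by (simp add: dvd_sum)
next
  assume "int (Gcd (v ` J)) dvd c"
  then obtain z where z: "c = int (Gcd (v ` J)) * z"
    by (elim dvdE)
  obtain \<alpha> where "\<alpha> \<in> ZJ n v J (int (Gcd (v ` J)))"
    using ZJ_Gcd_nonempty[OF finite_subset[OF assms] assms] by blast
  moreover have "(\<Sum>i\<in>{1..n}. z * \<alpha> i * int (v i)) = z * (\<Sum>i\<in>{1..n}. \<alpha> i * int (v i))"
    by (simp add: sum_distrib_left mult.assoc)
  ultimately have "(\<lambda>i. z * \<alpha> i) \<in> ZJ n v J c"
    by (auto simp: ZJ_def z mult.commute)
  then show "ZJ n v J c \<noteq> {}"
    by blast
qed

lemma int_dvd_diff_iff: "b \<le> a \<Longrightarrow> int m dvd int a - int b \<longleftrightarrow> m dvd a - b"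
  by (metis int_dvd_int_iff of_nat_diff)

lemma C2bar_imp_divisibility_dominated:
  assumes "\<forall>i\<in>{1..n}. v i < d" "C2bar n v d"
  shows "divisibility_dominated {1..n} v (\<lambda>j. d - v j)"
  unfolding divisibility_dominated_def
proof (intro allI impI)
  fix m :: nat
  define J where "J = {j\<in>{1..n}. m dvd v j}"
  show "card J \<le> card {j\<in>{1..n}. m dvd d - v j}"
  proof (cases "J = {}")
    case False
    have "J \<subseteq> {1..n}"
      by (auto simp: J_def)
    then obtain K where K: "K \<subseteq> {1..n}" "card K = card J"
        "\<forall>k\<in>K. ZJ n v J (int d - int (v k)) \<noteq> {}"
      using assms(2)[unfolded C2bar_def, rule_format, OF \<open>J \<subseteq> {1..n}\<close> False] by blast
    have "int m dvd int (Gcd (v ` J))"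
      by (simp add: J_def dvd_Gcd_iff)
    have "K \<subseteq> {j\<in>{1..n}. m dvd d - v j}"
    proof
      fix k assume "k \<in> K"
      then have "int (Gcd (v ` J)) dvd int d - int (v k)"
        using K(3) ZJ_nonempty_iff[OF \<open>J \<subseteq> {1..n}\<close>] by blast
      then have "int m dvd int d - int (v k)"
        using \<open>int m dvd int (Gcd (v ` J))\<close> by (rule dvd_trans[rotated])
      moreover have "v k \<le> d"
        using assms(1) \<open>k \<in> K\<close> K(1) by (auto intro: less_imp_le_nat)
      ultimately show "k \<in> {j\<in>{1..n}. m dvd d - v j}"
        using \<open>k \<in> K\<close> K(1) int_dvd_diff_iff by blast
    qed
    then show ?thesis
      using card_mono[of "{j\<in>{1..n}. m dvd d - v j}" K] K(2) by simp
  qed simp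
qed

lemma divisibility_dominated_imp_C2bar:
  assumes "\<forall>i\<in>{1..n}. 0 < v i \<and> v i < d" "divisibility_dominated {1..n} v (\<lambda>j. d - v j)"
  shows "C2bar n v d"
  unfolding C2bar_def
proof (intro allI impI)
  fix J assume J: "J \<subseteq> {1..n}" "J \<noteq> {}"
  define g where "g = Gcd (v ` J)"
  obtain j where "j \<in> J"
    using J(2) by blast
  then have "v j \<noteq> 0"
    using J(1) assms(1) by auto
  then have "g \<noteq> 0"
    using \<open>j \<in> J\<close> by (auto simp: g_def)
  then have "g > 0"
    by simp
  have "card J \<le> card {j\<in>{1..n}. g dvd v j}"
    using J by (intro card_mono) (auto simp: g_def)
  also have "\<dots> \<le> card {j\<in>{1..n}. g dvd d - v j}"
    using assms(2) \<open>g > 0\<close> by (simp add: divisibility_dominated_def)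
  finally obtain K where K: "K \<subseteq> {j\<in>{1..n}. g dvd d - v j}" "card K = card J"
    by (meson obtain_subset_with_card_n)
  have "ZJ n v J (int d - int (v k)) \<noteq> {}" if "k \<in> K" for k
  proof -
    have "k \<in> {1..n}"
      using K(1) that by blast
    then have "v k \<le> d"
      using assms(1) by (simp add: less_imp_le_nat)
    moreover have "g dvd d - v k"
      using K(1) that by blast
    ultimately show ?thesis
      unfolding ZJ_nonempty_iff[OF J(1)] g_def[symmetric] by (simp add: int_dvd_diff_iff)
  qed
  then show "\<exists>K\<subseteq>{1..n}. card K = card J \<and> (\<forall>k\<in>K. ZJ n v J (int d - int (v k)) \<noteq> {})"
    using K by blast
qed

lemma C2bar_iff_divisibility_dominated:
  assumes "\<forall>i\<in>{1..n}. 0 < v i \<and> v i < d"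
  shows "C2bar n v d \<longleftrightarrow> divisibility_dominated {1..n} v (\<lambda>j. d - v j)"
  using assms C2bar_imp_divisibility_dominated divisibility_dominated_imp_C2bar by blast

lemma divisibility_dominated_restrict:
  assumes "divisibility_dominated I b (\<lambda>j. c - b j)"
    and "finite I" "\<forall>j\<in>I. b j \<le> c" "m > 0" "m dvd c"
  shows "divisibility_dominated {j\<in>I. m dvd b j} b (\<lambda>j. c - b j)"
  unfolding divisibility_dominated_def
proof (intro allI impI)
  fix k :: nat assume "k > 0"
  have "{j\<in>{j\<in>I. m dvd b j}. k dvd b j} = {j\<in>I. lcm k m dvd b j}"
    by auto
  also have "card \<dots> \<le> card {j\<in>I. lcm k m dvd c - b j}"
    using assms(1) \<open>k > 0\<close> \<open>m > 0\<close> unfolding divisibility_dominated_def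
    by (simp only: lcm_pos_nat)
  also have "\<dots> \<le> card {j\<in>{j\<in>I. m dvd b j}. k dvd c - b j}"
    using assms(2,3,5) by (intro card_mono) (auto dest: dvd_diffD1)
  finally show "card {j\<in>{j\<in>I. m dvd b j}. k dvd b j} \<le> card {j\<in>{j\<in>I. m dvd b j}. k dvd c - b j}" .
qed

section \<open>The weights v_j / d\<close>

lemma tn_pos: "d > 0 \<Longrightarrow> tn v d j > 0"
  unfolding tn_def by (simp add: div_greater_zero_iff gcd_le2_nat)

lemma tn_dvd: "tn v d j dvd d"
  unfolding tn_def by (metis dvd_div_mult_self dvd_triv_left gcd_dvd2)

lemma tn_mult_eq_sn_mult: "tn v d j * v j = sn v d j * d"
  unfolding tn_def sn_def by (simp add: div_mult_swap mult.commute)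

lemma tn_dvd_iff:
  assumes "d > 0" "g > 0" "g dvd d"
  shows "tn v d j dvd g \<longleftrightarrow> d div g dvd v j"
proof -
  let ?h = "gcd (v j) d"
  have "?h \<noteq> 0"
    using assms(1) by simp
  then have "tn v d j dvd g \<longleftrightarrow> d dvd g * ?h"
    unfolding tn_def by (simp add: div_dvd_iff_mult)
  also have "\<dots> \<longleftrightarrow> d div g dvd ?h"
    using div_dvd_iff_mult[of g d ?h] assms(2,3) by (simp add: mult.commute)
  also have "\<dots> \<longleftrightarrow> d div g dvd v j"
    using dvd_div_mult_self[OF assms(3)] by (metis dvd_triv_left gcd_greatest_iff)
  finally show ?thesis .
qed

lemma dw_dvd: "dw n v d dvd d"
  unfolding dw_def by (rule Lcm_least) (auto simp: tn_dvd)

lemma tn_dvd_dw: "j \<in> {1..n} \<Longrightarrow> tn v d j dvd dw n v d"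
  unfolding dw_def by (rule dvd_Lcm) simp

lemma Mset_gcd_dw: "Mset n v d (gcd k (dw n v d)) = Mset n v d k"
  unfolding Mset_def using tn_dvd_dw by auto

lemma mu_gcd_dw: "mu n v d (gcd k (dw n v d)) = mu n v d k"
  unfolding mu_def by (simp only: Mset_gcd_dw)

lemma Mset_of_divisor:
  assumes "d > 0" "g > 0" "g dvd d"
  shows "Mset n v d g = {j\<in>{1..n}. d div g dvd v j}"
  unfolding Mset_def using tn_dvd_iff[OF assms] by blast

lemma Mset_subset: "Mset n v d k \<subseteq> {1..n}"
  by (auto simp: Mset_def)

lemma lefschetz_Dw_factor:
  assumes "0 < v j" "v j < d"
  shows "lefschetz (\<lambda>z. 1 / of_nat (sn v d j) * Lambda (tn v d j) z - Lambda 1 z) k =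
    (if tn v d j dvd k then of_rat (of_nat (d - v j) / of_nat (v j)) else -1)"
proof -
  have "sn v d j \<noteq> 0"
    using assms by (simp add: sn_def div_eq_0_iff gcd_le1_nat not_less)
  then have factor_value: "(1 / of_nat (sn v d j)) * of_nat (tn v d j) - 1 = (of_nat (d - v j) / of_nat (v j) :: rat)"
    using assms tn_mult_eq_sn_mult[of v d j]
    by (simp add: field_simps of_nat_diff flip: of_nat_mult)
  have "lefschetz (\<lambda>z. 1 / of_nat (sn v d j) * Lambda (tn v d j) z - Lambda 1 z) k =
      of_rat (1 / of_nat (sn v d j)) * (if tn v d j dvd k then of_nat (tn v d j) else 0) - 1"
    using assms unfolding lefschetz_lincomb[OF finite_support_Lambda finite_support_Lambda]
    by (simp add: lefschetz_Lambda tn_pos)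
  also have "\<dots> = (if tn v d j dvd k then of_rat (of_nat (d - v j) / of_nat (v j)) else -1)"
    unfolding factor_value[symmetric] by (simp add: of_rat_mult of_rat_diff of_rat_divide)
  finally show ?thesis .
qed

lemma lefschetz_Dw:
  assumes "\<forall>i\<in>{1..n}. 0 < v i \<and> v i < d"
  shows "lefschetz (Dw n v d) k = of_rat ((-1) ^ (n - card (Mset n v d k)) * mu n v d k)"
proof -
  define c :: "nat \<Rightarrow> complex" where "c j = of_rat (of_nat (d - v j) / of_nat (v j))" for j
  define f where "f j = (\<lambda>z. 1 / of_nat (sn v d j) * Lambda (tn v d j) z - Lambda 1 z)" for j
  have "Dw n v d = gr_prod f n"
    unfolding Dw_def f_def ..
  moreover have "\<forall>j\<in>{1..n}. finite {z. f j z \<noteq> 0}"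
    unfolding f_def by (intro ballI finite_support_lincomb finite_support_Lambda)
  ultimately have "lefschetz (Dw n v d) k = (\<Prod>j\<in>{1..n}. lefschetz (f j) k)"
    using lefschetz_gr_prod by simp
  also have "\<dots> = (\<Prod>j\<in>{1..n}. if j \<in> Mset n v d k then c j else -1)"
  proof (rule prod.cong[OF refl])
    fix j assume "j \<in> {1..n}"
    then show "lefschetz (f j) k = (if j \<in> Mset n v d k then c j else -1)"
      using assms unfolding f_def by (subst lefschetz_Dw_factor) (auto simp: c_def Mset_def)
  qed
  also have "\<dots> = (\<Prod>j\<in>Mset n v d k. c j) * (\<Prod>j\<in>{1..n} - Mset n v d k. -1)"
    using Mset_subset[of n v d k] by (simp add: prod.If_cases Int_absorb1 Diff_eq)
  also have "\<dots> = (\<Prod>j\<in>Mset n v d k. c j) * (-1) ^ (n - card (Mset n v d k))"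
    using Mset_subset[of n v d k] by (simp add: card_Diff_subset finite_subset)
  also have "\<dots> = of_rat ((-1) ^ (n - card (Mset n v d k)) * mu n v d k)"
    by (simp add: mu_def c_def of_rat_mult of_rat_prod of_rat_power mult.commute)
  finally show ?thesis .
qed

lemma mu_pos:
  assumes "\<forall>i\<in>{1..n}. 0 < v i \<and> v i < d"
  shows "mu n v d k > 0"
  unfolding mu_def using assms by (intro prod_pos) (auto simp: Mset_def)

lemma divisibility_dominated_Mset:
  assumes "d > 0" "\<forall>i\<in>{1..n}. 0 < v i \<and> v i < d" "C2bar n v d" "k > 0"
  shows "divisibility_dominated (Mset n v d k) v (\<lambda>j. d - v j)"
proof -
  define g where "g = gcd k (dw n v d)"
  have "g > 0" "g dvd d"
    using assms(4) dw_dvd[of n v d] by (auto simp: g_def intro: dvd_trans)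
  then have "d div g > 0" and "d div g dvd d"
    using assms(1) by (simp_all add: div_greater_zero_iff dvd_imp_le) (metis dvd_div_mult_self dvd_triv_left)
  have Mset: "Mset n v d k = {j\<in>{1..n}. d div g dvd v j}"
    using Mset_of_divisor[OF assms(1) \<open>g > 0\<close> \<open>g dvd d\<close>, where n = n and v = v]
    by (simp add: g_def Mset_gcd_dw)
  have "divisibility_dominated {1..n} v (\<lambda>j. d - v j)"
    using C2bar_iff_divisibility_dominated[OF assms(2)] assms(3) by blast
  moreover have "\<forall>j\<in>{1..n}. v j \<le> d"
    using assms(2) by (simp add: less_imp_le_nat)
  ultimately show ?thesis
    unfolding Mset
    using divisibility_dominated_restrict \<open>d div g > 0\<close> \<open>d div g dvd d\<close> by blast
qed

lemma mu_in_Nats: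
  assumes "d > 0" "\<forall>i\<in>{1..n}. 0 < v i \<and> v i < d" "C2bar n v d" "k > 0"
  shows "mu n v d k \<in> \<nat>"
proof -
  define M where "M = Mset n v d k"
  have "finite M" "\<forall>j\<in>M. 0 < v j \<and> v j < d"
    using assms(2) Mset_subset[of n v d k] by (auto simp: M_def finite_subset)
  then have "(pow_minus_one_prod M v :: int poly) dvd monom 1 0 * pow_minus_one_prod M (\<lambda>j. d - v j)"
    using divisibility_dominated_Mset[OF assms] by (subst pow_minus_one_prod_dvd_iff) (auto simp: M_def)
  then have "(\<Prod>j\<in>M. v j) dvd (\<Prod>j\<in>M. d - v j)"
    by (intro prod_dvd_if_pow_minus_one_prod_dvd) (simp add: monom_0 one_pCons)
  then obtain q where q: "(\<Prod>j\<in>M. d - v j) = (\<Prod>j\<in>M. v j) * q"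
    by (elim dvdE)
  have "(\<Prod>j\<in>M. v j) > 0"
    using \<open>\<forall>j\<in>M. 0 < v j \<and> v j < d\<close> by (simp add: prod_pos)
  then have "mu n v d k = of_nat q"
    unfolding mu_def M_def[symmetric] prod_dividef by (simp flip: of_nat_prod add: q)
  then show ?thesis
    by simp
qed

lemma prod_Fract:
  "finite I \<Longrightarrow> (\<Prod>j\<in>I. Fract (f j) (g j)) = Fract (\<Prod>j\<in>I. f j) (\<Prod>j\<in>I. g j)"
  by (induction I rule: finite_induct) (simp_all add: One_fract_def)

lemma rho_eq_Fract:
  "rho n v d = Fract (monom 1 (\<Sum>j\<in>{1..n}. v j) * pow_minus_one_prod {1..n} (\<lambda>j. d - v j))
                     (pow_minus_one_prod {1..n} v)"
  unfolding rho_def pow_minus_one_prod_def by (simp add: prod_Fract)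

lemma rho_in_int_poly_iff_C2bar:
  assumes "\<forall>i\<in>{1..n}. 0 < v i \<and> v i < d"
  shows "(\<exists>p :: int poly. rho n v d = Fract (map_poly of_int p) 1) \<longleftrightarrow> C2bar n v d"
proof -
  let ?S = "\<Sum>j\<in>{1..n}. v j"
  let ?A = "pow_minus_one_prod {1..n} (\<lambda>j. d - v j) :: int poly"
  let ?B = "pow_minus_one_prod {1..n} v :: int poly"
  have "(pow_minus_one_prod {1..n} v :: rat poly) \<noteq> 0"
    using assms by (simp add: pow_minus_one_prod_nonzero)
  then have "rho n v d = Fract (map_poly of_int p) 1 \<longleftrightarrow> monom 1 ?S * ?A = p * ?B" for p
    unfolding rho_eq_Fract
    using map_poly_of_int_eq_iff[of "monom 1 ?S * ?A" "p * ?B", where 'a = rat]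
    by (simp add: eq_fract)
  then have "(\<exists>p :: int poly. rho n v d = Fract (map_poly of_int p) 1) \<longleftrightarrow> ?B dvd monom 1 ?S * ?A"
    by (auto simp: dvd_def mult.commute)
  also have "\<dots> \<longleftrightarrow> divisibility_dominated {1..n} v (\<lambda>j. d - v j)"
    using assms by (intro pow_minus_one_prod_dvd_iff) auto
  also have "\<dots> \<longleftrightarrow> C2bar n v d"
    using C2bar_iff_divisibility_dominated[OF assms] ..
  finally show ?thesis .
qed

theorem lemma3p7:
  fixes n d :: nat and v :: "nat \<Rightarrow> nat"
  assumes "d > 0"
    and "\<forall>i\<in>{1..n}. 0 < v i \<and> v i < d"
  shows "(\<forall>k>0. Mset n v d k = Mset n v d (gcd k (dw n v d))
            \<and> Mset n v d (gcd k (dw n v d)) = {j\<in>{1..n}. (d div gcd k (dw n v d)) dvd v j}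
            \<and> mu n v d k = mu n v d (gcd k (dw n v d)))
    \<and> (\<forall>k>0. lefschetz (Dw n v d) k = lefschetz (Dw n v d) (gcd k (dw n v d))
            \<and> lefschetz (Dw n v d) k = of_rat ((-1) ^ (n - card (Mset n v d k)) * mu n v d k)
            \<and> (-1) ^ (n - card (Mset n v d k)) * mu n v d k \<noteq> 0)
    \<and> (C2bar n v d \<longrightarrow> (\<forall>k>0. mu n v d k \<in> \<nat>))
    \<and> (C2bar n v d \<longleftrightarrow> (\<exists>p :: int poly. rho n v d = Fract (map_poly of_int p) 1))"
proof -
  have gcd_dw: "gcd k (dw n v d) > 0" "gcd k (dw n v d) dvd d" if "k > 0" for k
    using that dw_dvd[of n v d] by (auto intro: dvd_trans)
  have part_a: "\<forall>k>0. Mset n v d k = Mset n v d (gcd k (dw n v d))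
            \<and> Mset n v d (gcd k (dw n v d)) = {j\<in>{1..n}. (d div gcd k (dw n v d)) dvd v j}
            \<and> mu n v d k = mu n v d (gcd k (dw n v d))"
  proof (intro allI impI conjI)
    fix k :: nat assume "k > 0"
    show "Mset n v d (gcd k (dw n v d)) = {j\<in>{1..n}. (d div gcd k (dw n v d)) dvd v j}"
      using Mset_of_divisor[OF assms(1) gcd_dw[OF \<open>k > 0\<close>]] .
  qed (simp_all add: Mset_gcd_dw mu_gcd_dw)
  have part_b: "\<forall>k>0. lefschetz (Dw n v d) k = lefschetz (Dw n v d) (gcd k (dw n v d))
            \<and> lefschetz (Dw n v d) k = of_rat ((-1) ^ (n - card (Mset n v d k)) * mu n v d k)
            \<and> (-1) ^ (n - card (Mset n v d k)) * mu n v d k \<noteq> 0"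
    using mu_pos[OF assms(2)] by (simp add: lefschetz_Dw[OF assms(2)] Mset_gcd_dw mu_gcd_dw order_less_imp_not_eq2)
  show ?thesis
    using part_a part_b mu_in_Nats[OF assms] rho_in_int_poly_iff_C2bar[OF assms(2)] by blast
qed

end
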